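(* Let $b(z)$ be a holomorphic function, $\bar b(\bar z)=\overline{b(z)}$, let $r(y)$ and $k(y)$ be arbitrary smooth real-valued functions of one real variable, and put $y=i(\bar q-q)/2$. Let $G(z,\bar z)$ be a real function with $G_{z\bar z}=\dfrac{b(z)+\bar b(\bar z)}{(z+\bar z)^2}$ and let $K(y,z,\bar z)$ be an antiderivative with respect to $y$ of $\ln\!\left[\dfrac{\bar z+2ik(y)}{z-2ik(y)}\right]$. Then each of the functions $$\psi_1=[q+b(z)]\ln[q+b(z)]+[\bar q+\bar b(\bar z)]\ln[\bar q+\bar b(\bar z)]-(q+\bar q)[\ln(z+\bar z)+1]+G(z,\bar z)+r(y),$$ $$\psi_2=\psi_1+2iy\ln(\bar z/z),\qquad \psi_3=\psi_1+2iK(y,z,\bar z)$$ is a solution of $$\psi_{q\bar q}\psi_{z\bar z}-\psi_{q\bar z}\psi_{\bar q z}=e^{\psi_q+\psi_{\bar q}}\bigl(\psi_{q\bar q}^2-\psi_{qq}\psi_{\bar q\bar q}\bigr).$$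
   Context: All functions are considered on an open set where the logarithms are defined, with branches chosen so that $\ln(\bar q+\bar b)=\overline{\ln(q+b)}$, and with $z+\bar z>0$. Subscripts denote partial (Wirtinger) derivatives with respect to the complex variables $q,\bar q,z,\bar z$; bars denote complex conjugation. *)

theory Defs
  imports "HOL-Analysis.Analysis"
begin

definition dd :: "('a::real_normed_vector \<Rightarrow> 'b::real_normed_vector) \<Rightarrow> 'a \<Rightarrow> 'a \<Rightarrow> 'b" where
  "dd f v p = vector_derivative (\<lambda>t::real. f (p + t *\<^sub>R v)) (at 0)"

definition wz :: "(complex \<Rightarrow> complex) \<Rightarrow> complex \<Rightarrow> complex" where
  "wz f z = (dd f 1 z - \<i> * dd f \<i> z) / 2"
definition wzb :: "(complex \<Rightarrow> complex) \<Rightarrow> complex \<Rightarrow> complex" where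
  "wzb f z = (dd f 1 z + \<i> * dd f \<i> z) / 2"

definition Wq :: "(complex \<times> complex \<Rightarrow> complex) \<Rightarrow> complex \<times> complex \<Rightarrow> complex" where
  "Wq f p = (dd f (1, 0) p - \<i> * dd f (\<i>, 0) p) / 2"
definition Wqb :: "(complex \<times> complex \<Rightarrow> complex) \<Rightarrow> complex \<times> complex \<Rightarrow> complex" where
  "Wqb f p = (dd f (1, 0) p + \<i> * dd f (\<i>, 0) p) / 2"
definition Wz :: "(complex \<times> complex \<Rightarrow> complex) \<Rightarrow> complex \<times> complex \<Rightarrow> complex" where
  "Wz f p = (dd f (0, 1) p - \<i> * dd f (0, \<i>) p) / 2"
definition Wzb :: "(complex \<times> complex \<Rightarrow> complex) \<Rightarrow> complex \<times> complex \<Rightarrow> complex" where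
  "Wzb f p = (dd f (0, 1) p + \<i> * dd f (0, \<i>) p) / 2"

definition solves :: "(complex \<times> complex) set \<Rightarrow> (complex \<times> complex \<Rightarrow> complex) \<Rightarrow> bool" where
  "solves S \<psi> \<longleftrightarrow> (\<forall>p\<in>S.
     Wqb (Wq \<psi>) p * Wzb (Wz \<psi>) p - Wzb (Wq \<psi>) p * Wz (Wqb \<psi>) p
     = exp (Wq \<psi> p + Wqb \<psi> p) * ((Wqb (Wq \<psi>) p)\<^sup>2 - Wq (Wq \<psi>) p * Wqb (Wqb \<psi>) p))"

definition smooth_real :: "(real \<Rightarrow> real) \<Rightarrow> bool" where
  "smooth_real f \<longleftrightarrow> (\<forall>n x. ((deriv ^^ n) f) differentiable (at x))"

definition oint :: "(real \<Rightarrow> complex) \<Rightarrow> real \<Rightarrow> real \<Rightarrow> complex" where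
  "oint f a c = (if a \<le> c then integral {a..c} f else - integral {c..a} f)"

definition Kfun :: "(real \<Rightarrow> real) \<Rightarrow> real \<Rightarrow> real \<Rightarrow> complex \<Rightarrow> complex" where
  "Kfun k y0 y z = oint (\<lambda>t. Ln ((cnj z + 2 * \<i> * of_real (k t)) / (z - 2 * \<i> * of_real (k t)))) y0 y"

text \<open>L p is the chosen branch of ln(q + b(z)); ln(qbar + bbar(zbar)) is its conjugate.
  y = i(qbar - q)/2 = Im q.\<close>
definition psi1 :: "(complex \<Rightarrow> complex) \<Rightarrow> (complex \<times> complex \<Rightarrow> complex) \<Rightarrow> (complex \<Rightarrow> real)
    \<Rightarrow> (real \<Rightarrow> real) \<Rightarrow> complex \<times> complex \<Rightarrow> complex" where
  "psi1 b L G r p = (let q = fst p; z = snd p in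
      (q + b z) * L p + (cnj q + cnj (b z)) * cnj (L p)
      - (q + cnj q) * (Ln (z + cnj z) + 1) + of_real (G z) + of_real (r (Im q)))"

definition psi2 :: "(complex \<Rightarrow> complex) \<Rightarrow> (complex \<times> complex \<Rightarrow> complex) \<Rightarrow> (complex \<Rightarrow> real)
    \<Rightarrow> (real \<Rightarrow> real) \<Rightarrow> complex \<times> complex \<Rightarrow> complex" where
  "psi2 b L G r p = psi1 b L G r p + 2 * \<i> * of_real (Im (fst p)) * Ln (cnj (snd p) / snd p)"

definition psi3 :: "(complex \<Rightarrow> complex) \<Rightarrow> (complex \<times> complex \<Rightarrow> complex) \<Rightarrow> (complex \<Rightarrow> real)
    \<Rightarrow> (real \<Rightarrow> real) \<Rightarrow> (real \<Rightarrow> real) \<Rightarrow> real \<Rightarrow> complex \<times> complex \<Rightarrow> complex" where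
  "psi3 b L G r k y0 p = psi1 b L G r p + 2 * \<i> * Kfun k y0 (Im (fst p)) (snd p)"

end

theory Submission
  imports Defs "HOL-Complex_Analysis.Cauchy_Integral_Formula"
begin

text \<open>
  Every \<open>\<psi>\<^sub>i\<close> has the form \<open>psi0(q, z) + \<Phi>(y, z)\<close> with \<open>y = Im q\<close>, where
  \<open>psi0 = u ln u + u\<^sup>- ln u\<^sup>- - (q + q\<^sup>-)(ln s + 1) + G\<close>, \<open>u = q + b(z)\<close>, \<open>s = z + z\<^sup>-\<close>.
  All derivatives are computed with a small calculus of Wirtinger derivatives: a
  real-differentiable \<open>f\<close> has derivative \<open>h \<mapsto> a h + c cnj h\<close>, and sum, product, conjugation
  and holomorphic chain rules act on the pair \<open>(a, c) = (f\<^sub>z, f\<^sub>z\<^sub>-)\<close>.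

  For \<open>\<Phi>\<close> we isolate the conditions that make \<open>psi0 + \<Phi>\<close> a solution
  (\<open>admissible_perturbation\<close>): \<open>\<Phi>\<^sub>z\<close> is holomorphic in \<open>z\<close>, and the mixed derivatives
  \<open>\<psi>\<^sub>q\<^sub>z\<^sub>-\<close>, \<open>\<psi>\<^sub>q\<^sub>-\<^sub>z\<close> still multiply to \<open>1/s\<^sup>2\<close>. In the locale of the theorem's hypotheses
  we compute all second derivatives of \<open>psi0 + \<Phi>\<close>; the equation then reduces to a rational
  identity (\<open>solution_identity\<close>), using \<open>G\<^sub>z\<^sub>z\<^sub>- = (b + b\<^sup>-)/s\<^sup>2\<close>.

  Finally we check admissibility: \<open>\<Phi> = 0\<close> is admissible, adding \<open>r(y)\<close> preserves admissibility,
  and \<open>2\<i>K\<close> is admissible since \<open>K = A\<^sup>- - A\<close> for an integral \<open>A\<close> holomorphic in \<open>z\<close>.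
  This gives \<open>\<psi>\<^sub>1\<close> and \<open>\<psi>\<^sub>3\<close>; \<open>\<psi>\<^sub>2\<close> is the special case \<open>k = 0\<close>, \<open>y\<^sub>0 = 0\<close> of \<open>\<psi>\<^sub>3\<close>.
\<close>

text \<open>Expressing differentiability in this form turns the usual rules
  (sum, product, chain rule, conjugation) into rules on the pairs \<open>(a, c)\<close>.\<close>
definition has_wirtinger :: "(complex \<Rightarrow> complex) \<Rightarrow> complex \<Rightarrow> complex \<Rightarrow> complex \<Rightarrow> bool" where
  "has_wirtinger f a c z \<longleftrightarrow> (f has_derivative (\<lambda>h. a * h + c * cnj h)) (at z)"

lemma dd_has_derivative:
  assumes "(f has_derivative f') (at z)"
  shows "dd f v z = f' v"
proof -
  have "((\<lambda>t::real. z + t *\<^sub>R v) has_derivative (\<lambda>t. t *\<^sub>R v)) (at 0)"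
    by (auto intro!: derivative_eq_intros)
  from has_derivative_compose[OF this] assms
  have "((\<lambda>t. f (z + t *\<^sub>R v)) has_derivative (\<lambda>t. f' (t *\<^sub>R v))) (at 0)"
    by simp
  then have "((\<lambda>t. f (z + t *\<^sub>R v)) has_vector_derivative f' v) (at 0)"
    unfolding has_vector_derivative_def
    using linear_scale[OF has_derivative_linear[OF assms]] by simp
  then show ?thesis unfolding dd_def by (rule vector_derivative_at)
qed

lemma has_wirtinger_wz:
  assumes "has_wirtinger f a c z"
  shows "wz f z = a" and "wzb f z = c"
proof -
  have "dd f v z = a * v + c * cnj v" for v
    using dd_has_derivative assms by (simp add: has_wirtinger_def)
  then show "wz f z = a" "wzb f z = c"
    unfolding wz_def wzb_def by (simp_all add: field_simps)
qed

text \<open>Every real-differentiable map has its Wirtinger derivatives as coefficients: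
  a real-linear map \<open>f'\<close> of \<open>\<complex>\<close> is \<open>h \<mapsto> f'(1) Re h + f'(\<i>) Im h\<close>.\<close>
lemma differentiable_has_wirtinger:
  fixes f :: "complex \<Rightarrow> complex"
  assumes "f differentiable (at z)"
  shows "has_wirtinger f (wz f z) (wzb f z) z"
proof -
  obtain f' where D: "(f has_derivative f') (at z)"
    using assms by (auto simp: differentiable_def)
  have lin: "linear f'" using D by (rule has_derivative_linear)
  have "f' h = wz f z * h + wzb f z * cnj h" for h
  proof -
    have "h = Re h *\<^sub>R 1 + Im h *\<^sub>R \<i>" by (simp add: complex_eq_iff)
    then have "f' h = f' (Re h *\<^sub>R 1 + Im h *\<^sub>R \<i>)" by simp
    also have "\<dots> = Re h *\<^sub>R f' 1 + Im h *\<^sub>R f' \<i>"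
      using lin by (simp add: linear_add linear_scale)
    also have "\<dots> = of_real (Re h) * f' 1 + of_real (Im h) * f' \<i>"
      by (simp add: scaleR_conv_of_real)
    also have "\<dots> = wz f z * h + wzb f z * cnj h"
      unfolding wz_def wzb_def dd_has_derivative[OF D]
      by (simp add: field_simps complex_eq_iff)
    finally show ?thesis .
  qed
  then have "f' = (\<lambda>h. wz f z * h + wzb f z * cnj h)" by auto
  then show ?thesis using D by (simp add: has_wirtinger_def)
qed

lemma has_wirtinger_transform:
  assumes "has_wirtinger f a c z" "open T" "z \<in> T" "\<And>w. w \<in> T \<Longrightarrow> f w = g w"
    and "a = a'" "c = c'"
  shows "has_wirtinger g a' c' z"
  using assms has_derivative_transform_within_open unfolding has_wirtinger_def by blast

lemma has_wirtinger_cong: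
  "has_wirtinger f a c z \<Longrightarrow> (\<And>w. f w = g w) \<Longrightarrow> a = a' \<Longrightarrow> c = c' \<Longrightarrow> has_wirtinger g a' c' z"
  by (metis ext)

lemma has_wirtinger_const: "has_wirtinger (\<lambda>w. k) 0 0 z"
  by (simp add: has_wirtinger_def)

lemma has_wirtinger_id: "has_wirtinger (\<lambda>w. w) 1 0 z"
  by (simp add: has_wirtinger_def has_derivative_ident)

lemma has_wirtinger_cnj_id: "has_wirtinger (\<lambda>w. cnj w) 0 1 z"
  unfolding has_wirtinger_def
  by (simp add: bounded_linear.has_derivative[OF bounded_linear_cnj has_derivative_ident])

lemma has_wirtinger_add:
  assumes "has_wirtinger f a1 c1 z" "has_wirtinger g a2 c2 z"
  shows "has_wirtinger (\<lambda>w. f w + g w) (a1 + a2) (c1 + c2) z"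
  using has_derivative_add[OF assms[unfolded has_wirtinger_def]]
  unfolding has_wirtinger_def by (simp add: algebra_simps)

lemma has_wirtinger_diff:
  assumes "has_wirtinger f a1 c1 z" "has_wirtinger g a2 c2 z"
  shows "has_wirtinger (\<lambda>w. f w - g w) (a1 - a2) (c1 - c2) z"
  using has_derivative_diff[OF assms[unfolded has_wirtinger_def]]
  unfolding has_wirtinger_def by (simp add: algebra_simps)

lemma has_wirtinger_mult:
  assumes "has_wirtinger f a1 c1 z" "has_wirtinger g a2 c2 z"
  shows "has_wirtinger (\<lambda>w. f w * g w) (f z * a2 + a1 * g z) (f z * c2 + c1 * g z) z"
  using has_derivative_mult[OF assms[unfolded has_wirtinger_def]]
  unfolding has_wirtinger_def by (simp add: algebra_simps)

lemma has_wirtinger_cnj: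
  assumes "has_wirtinger f a c z"
  shows "has_wirtinger (\<lambda>w. cnj (f w)) (cnj c) (cnj a) z"
  using bounded_linear.has_derivative[OF bounded_linear_cnj assms[unfolded has_wirtinger_def]]
  unfolding has_wirtinger_def by (simp add: algebra_simps)

lemma has_wirtinger_compose:
  assumes "(h has_field_derivative d) (at (f z))" "has_wirtinger f a c z"
  shows "has_wirtinger (\<lambda>w. h (f w)) (d * a) (d * c) z"
  using has_derivative_compose[OF assms(2)[unfolded has_wirtinger_def]
      assms(1)[unfolded has_field_derivative_def]]
  unfolding has_wirtinger_def by (simp add: algebra_simps)

lemma has_wirtinger_holomorphic:
  "(f has_field_derivative d) (at z) \<Longrightarrow> has_wirtinger f d 0 z"
  unfolding has_wirtinger_def has_field_derivative_def by simp

lemma has_wirtinger_Im: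
  assumes "(\<phi> has_vector_derivative d) (at (Im z))"
  shows "has_wirtinger (\<lambda>w. \<phi> (Im w)) (- (\<i>/2) * d) ((\<i>/2) * d) z"
proof -
  have "((\<lambda>w. \<phi> (Im w)) has_derivative (\<lambda>h. Im h *\<^sub>R d)) (at z)"
    using has_derivative_compose[OF bounded_linear_imp_has_derivative[OF bounded_linear_Im]
        assms[unfolded has_vector_derivative_def]] .
  moreover have "Im h *\<^sub>R d = - (\<i>/2) * d * h + (\<i>/2) * d * cnj h" for h
    by (simp add: scaleR_conv_of_real complex_eq_iff field_simps)
  ultimately show ?thesis unfolding has_wirtinger_def by simp
qed

lemma Wq_slice: "Wq f p = wz (\<lambda>w. f (w, snd p)) (fst p)"
  unfolding Wq_def wz_def dd_def by (cases p) simp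
lemma Wqb_slice: "Wqb f p = wzb (\<lambda>w. f (w, snd p)) (fst p)"
  unfolding Wqb_def wzb_def dd_def by (cases p) simp
lemma Wz_slice: "Wz f p = wz (\<lambda>w. f (fst p, w)) (snd p)"
  unfolding Wz_def wz_def dd_def by (cases p) simp
lemma Wzb_slice: "Wzb f p = wzb (\<lambda>w. f (fst p, w)) (snd p)"
  unfolding Wzb_def wzb_def dd_def by (cases p) simp

lemma open_slice_fst: "open S \<Longrightarrow> open {w. (w, z) \<in> S}"
proof -
  assume "open S"
  then have "open ((\<lambda>w. (w, z)) -` S)" by (intro open_vimage) (auto intro!: continuous_intros)
  then show ?thesis by (simp add: vimage_def)
qed

lemma open_slice_snd: "open S \<Longrightarrow> open {w. (q, w) \<in> S}"
proof -
  assume "open S"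
  then have "open ((\<lambda>w. (q, w)) -` S)" by (intro open_vimage) (auto intro!: continuous_intros)
  then show ?thesis by (simp add: vimage_def)
qed

text \<open>A continuous logarithm of a differentiable function \<open>\<phi>\<close> has derivative \<open>\<phi>'/\<phi>\<close>:
  near \<open>x\<close> it differs from the principal branch of \<open>Ln (\<phi> w / \<phi> x)\<close> by a constant.\<close>
lemma continuous_log_has_field_derivative:
  fixes f \<phi> :: "complex \<Rightarrow> complex"
  assumes T: "open T" "x \<in> T" and cont: "continuous_on T f"
    and exp_f: "\<And>w. w \<in> T \<Longrightarrow> exp (f w) = \<phi> w"
    and d\<phi>: "(\<phi> has_field_derivative d) (at x)"
  shows "(f has_field_derivative d / \<phi> x) (at x)"
proof -
  have \<phi>x: "\<phi> x \<noteq> 0" using exp_f[OF T(2)] exp_not_eq_zero by metis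
  define T' where "T' = f -` ball (f x) pi \<inter> T"
  have T': "open T'" "x \<in> T'"
    using continuous_on_open_vimage[OF T(1)] cont T(2) unfolding T'_def by auto
  have branch: "f w = f x + Ln (\<phi> w / \<phi> x)" if "w \<in> T'" for w
  proof -
    have "exp (f w - f x) = \<phi> w / \<phi> x" using exp_f that T(2) by (simp add: exp_diff T'_def)
    moreover have "\<bar>Im (f w - f x)\<bar> < pi"
      using abs_Im_le_cmod[of "f w - f x"] that by (simp add: T'_def dist_norm norm_minus_commute)
    ultimately have "Ln (\<phi> w / \<phi> x) = f w - f x" using Ln_exp[of "f w - f x"] by auto
    then show ?thesis by simp
  qed
  have dLn: "(Ln has_field_derivative inverse (\<phi> x / \<phi> x)) (at (\<phi> x / \<phi> x))"
    by (rule has_field_derivative_Ln) (simp add: \<phi>x)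
  have "((\<lambda>w. \<phi> w / \<phi> x) has_field_derivative d / \<phi> x) (at x)"
    using d\<phi> \<phi>x by (auto intro!: derivative_eq_intros)
  from DERIV_add[OF DERIV_const DERIV_chain2[OF dLn this]]
  have "((\<lambda>w. f x + Ln (\<phi> w / \<phi> x)) has_field_derivative d / \<phi> x) (at x)"
    using \<phi>x by simp
  then show ?thesis
    by (rule has_field_derivative_transform_within_open[OF _ T']) (use branch in auto)
qed

lemma Ln_cnj_div:
  assumes "0 < Re w"
  shows "Ln (cnj w / w) = cnj (Ln w) - Ln w"
proof (rule Ln_unique)
  have w0: "w \<noteq> 0" using assms by auto
  show "exp (cnj (Ln w) - Ln w) = cnj w / w" using w0 by (simp add: exp_diff exp_cnj[symmetric])
  have "\<bar>Im (Ln w)\<bar> < pi/2" using Re_Ln_pos_lt[OF w0] assms by simp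
  then show "- pi < Im (cnj (Ln w) - Ln w)" "Im (cnj (Ln w) - Ln w) \<le> pi" by auto
qed

lemma has_wirtinger_cnj_Ln_diff:
  assumes "0 < Re (z - c)"
  shows "has_wirtinger (\<lambda>w. cnj (Ln (w - c)) - Ln (w - c)) (- 1 / (z - c)) (1 / cnj (z - c)) z"
proof -
  have "(Ln has_field_derivative 1 / (z - c)) (at (z - c))"
    using has_field_derivative_Ln[of "z - c"] assms by (simp add: complex_nonpos_Reals_iff divide_inverse)
  from has_wirtinger_compose[OF this has_wirtinger_diff[OF has_wirtinger_id has_wirtinger_const]]
  have "has_wirtinger (\<lambda>w. Ln (w - c)) (1 / (z - c)) 0 z" by simp
  from has_wirtinger_diff[OF has_wirtinger_cnj[OF this] this] show ?thesis
    by simp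
qed

lemma has_wirtinger_Ln_re_part:
  assumes "0 < Re z"
  shows "has_wirtinger (\<lambda>w. Ln (w + cnj w)) (inverse (z + cnj z)) (inverse (z + cnj z)) z"
proof -
  have "(Ln has_field_derivative inverse (z + cnj z)) (at (z + cnj z))"
    using assms by (intro has_field_derivative_Ln) (simp add: complex_nonpos_Reals_iff)
  from has_wirtinger_compose[OF this has_wirtinger_add[OF has_wirtinger_id has_wirtinger_cnj_id]]
  show ?thesis by simp
qed

definition psi0 :: "(complex \<Rightarrow> complex) \<Rightarrow> (complex \<times> complex \<Rightarrow> complex) \<Rightarrow> (complex \<Rightarrow> real)
    \<Rightarrow> complex \<times> complex \<Rightarrow> complex" where
  "psi0 b L G p = (fst p + b (snd p)) * L p + (cnj (fst p) + cnj (b (snd p))) * cnj (L p)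
      - (fst p + cnj (fst p)) * (Ln (snd p + cnj (snd p)) + 1) + of_real (G (snd p))"

text \<open>Conditions on a term \<open>\<Phi>(y, z)\<close>, \<open>y = Im q\<close>, under which \<open>psi0 + \<Phi>\<close> solves the
  equation on the half-plane \<open>Re z > 0\<close>: \<open>g = \<Phi>\<^sub>y\<close>, the derivative \<open>C = \<Phi>\<^sub>z\<close> is
  holomorphic (so \<open>\<Phi>\<^sub>z\<^sub>z\<^sub>- = 0\<close>), and the mixed second derivatives
  \<open>\<psi>\<^sub>q\<^sub>z\<^sub>- = -1/s - \<i>/2 g\<^sub>z\<^sub>-\<close>, \<open>\<psi>\<^sub>q\<^sub>-\<^sub>z = -1/s + \<i>/2 g\<^sub>z\<close> (\<open>s = z + z\<^sup>-\<close>)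
  have product \<open>1/s\<^sup>2\<close>, as they do for \<open>\<Phi> = 0\<close>.\<close>
definition admissible_perturbation ::
    "(real \<Rightarrow> complex \<Rightarrow> complex) \<Rightarrow> (real \<Rightarrow> complex \<Rightarrow> complex) \<Rightarrow> (real \<Rightarrow> complex \<Rightarrow> complex) \<Rightarrow> bool" where
  "admissible_perturbation \<Phi> g C \<longleftrightarrow> (\<forall>y z. 0 < Re z \<longrightarrow>
     ((\<lambda>t. \<Phi> t z) has_vector_derivative g y z) (at y) \<and> (\<lambda>t. g t z) differentiable (at y) \<and>
     \<Phi> y differentiable (at z) \<and> wz (\<Phi> y) z = C y z \<and> C y field_differentiable (at z) \<and>
     g y differentiable (at z) \<and>
     (- inverse (z + cnj z) - \<i>/2 * wzb (g y) z) * (- inverse (z + cnj z) + \<i>/2 * wz (g y) z)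
       = inverse (z + cnj z) ^ 2)"

lemma admissible_perturbationI:
  assumes "\<And>y z. 0 < Re z \<Longrightarrow> ((\<lambda>t. \<Phi> t z) has_vector_derivative g y z) (at y)"
    and "\<And>y z. 0 < Re z \<Longrightarrow> (\<lambda>t. g t z) differentiable (at y)"
    and "\<And>y z. 0 < Re z \<Longrightarrow> has_wirtinger (\<Phi> y) (C y z) (D y z) z"
    and "\<And>y z. 0 < Re z \<Longrightarrow> C y field_differentiable (at z)"
    and "\<And>y z. 0 < Re z \<Longrightarrow> has_wirtinger (g y) (gz y z) (gzb y z) z"
    and "\<And>y z. 0 < Re z \<Longrightarrow>
      (- inverse (z + cnj z) - \<i>/2 * gzb y z) * (- inverse (z + cnj z) + \<i>/2 * gz y z) = inverse (z + cnj z) ^ 2"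
  shows "admissible_perturbation \<Phi> g C"
proof -
  have "\<Phi> y differentiable (at z)" "g y differentiable (at z)" if "0 < Re z" for y z
    using assms(3,5)[OF that] by (auto simp: has_wirtinger_def differentiable_def)
  then show ?thesis
    unfolding admissible_perturbation_def
    using assms has_wirtinger_wz[OF assms(3)] has_wirtinger_wz[OF assms(5)] by simp
qed

lemma admissible_perturbationD:
  assumes "admissible_perturbation \<Phi> g C" "0 < Re z"
  shows "((\<lambda>t. \<Phi> t z) has_vector_derivative g y z) (at y)"
    and "((\<lambda>t. g t z) has_vector_derivative vector_derivative (\<lambda>t. g t z) (at y)) (at y)"
    and "has_wirtinger (\<Phi> y) (C y z) (wzb (\<Phi> y) z) z"
    and "(C y has_field_derivative deriv (C y) z) (at z)"
    and "has_wirtinger (g y) (wz (g y) z) (wzb (g y) z) z"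
    and "(- inverse (z + cnj z) - \<i>/2 * wzb (g y) z) * (- inverse (z + cnj z) + \<i>/2 * wz (g y) z)
           = inverse (z + cnj z) ^ 2"
  using assms differentiable_has_wirtinger[of "\<Phi> y" z] differentiable_has_wirtinger[of "g y" z]
  unfolding admissible_perturbation_def vector_derivative_works DERIV_deriv_iff_field_differentiable
  by metis+

locale psi_setting =
  fixes S :: "(complex \<times> complex) set" and b :: "complex \<Rightarrow> complex"
    and L :: "complex \<times> complex \<Rightarrow> complex" and G :: "complex \<Rightarrow> real"
  assumes S_open: "open S"
    and S_pos: "\<forall>p\<in>S. Re (snd p) > 0"
    and b_hol: "b holomorphic_on (snd ` S)"
    and L_cont: "continuous_on S L"
    and L_log: "\<forall>p\<in>S. exp (L p) = fst p + b (snd p)"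
    and G_diff: "\<forall>z\<in>snd ` S. G differentiable (at z)"
    and G_diff2: "\<forall>v. \<forall>z\<in>snd ` S. (dd G v) differentiable (at z)"
    and G_eq: "\<forall>z\<in>snd ` S. wzb (wz (\<lambda>w. complex_of_real (G w))) z
                 = (b z + cnj (b z)) / (z + cnj z)\<^sup>2"
begin

abbreviation Gc :: "complex \<Rightarrow> complex" where "Gc \<equiv> \<lambda>w. complex_of_real (G w)"

lemma snd_mem: "(q, z) \<in> S \<Longrightarrow> z \<in> snd ` S"
  by force

lemma Re_pos: "(q, z) \<in> S \<Longrightarrow> 0 < Re z"
  using S_pos by force

lemma re_part_nonzero: "(q, z) \<in> S \<Longrightarrow> z + cnj z \<noteq> 0"
  using Re_pos by (force simp: complex_eq_iff)

lemma log_arg_nonzero: "(q, z) \<in> S \<Longrightarrow> q + b z \<noteq> 0"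
  using L_log exp_not_eq_zero by (metis fst_conv snd_conv)

lemma open_snd: "open (snd ` S)"
  using S_open by (rule open_image_snd)

lemma b_deriv: "z \<in> snd ` S \<Longrightarrow> (b has_field_derivative deriv b z) (at z)"
  using holomorphic_derivI[OF b_hol open_snd] by simp

lemma deriv_b_deriv: "z \<in> snd ` S \<Longrightarrow> (deriv b has_field_derivative deriv (deriv b) z) (at z)"
  using holomorphic_derivI[OF holomorphic_deriv[OF b_hol open_snd] open_snd] by simp

lemma L_deriv_q:
  assumes "(q, z) \<in> S"
  shows "((\<lambda>w. L (w, z)) has_field_derivative 1 / (q + b z)) (at q)"
proof -
  have "((\<lambda>w. L (w, z)) has_field_derivative 1 / ((\<lambda>w. w + b z) q)) (at q)"
  proof (rule continuous_log_has_field_derivative[OF open_slice_fst[OF S_open]])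
    show "continuous_on {w. (w, z) \<in> S} (\<lambda>w. L (w, z))"
      by (rule continuous_on_compose2[OF L_cont]) (auto intro!: continuous_intros)
  qed (use assms L_log in \<open>auto intro!: derivative_eq_intros\<close>)
  then show ?thesis by simp
qed

lemma L_deriv_z:
  assumes "(q, z) \<in> S"
  shows "((\<lambda>w. L (q, w)) has_field_derivative deriv b z / (q + b z)) (at z)"
proof -
  have "((\<lambda>w. L (q, w)) has_field_derivative deriv b z / ((\<lambda>w. q + b w) z)) (at z)"
  proof (rule continuous_log_has_field_derivative[OF open_slice_snd[OF S_open]])
    show "continuous_on {w. (q, w) \<in> S} (\<lambda>w. L (q, w))"
      by (rule continuous_on_compose2[OF L_cont]) (auto intro!: continuous_intros)
    show "((\<lambda>w. q + b w) has_field_derivative deriv b z) (at z)"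
      using b_deriv[OF snd_mem[OF assms]] by (auto intro!: derivative_eq_intros)
  qed (use assms L_log in auto)
  then show ?thesis by simp
qed

lemma Gc_has_derivative:
  assumes "z \<in> snd ` S"
  obtains G' where "(G has_derivative G') (at z)" "(Gc has_derivative (\<lambda>h. of_real (G' h))) (at z)"
proof -
  obtain G' where "(G has_derivative G') (at z)"
    using G_diff assms unfolding differentiable_def by blast
  with bounded_linear.has_derivative[OF bounded_linear_of_real this] that show ?thesis by blast
qed

lemma G_wirtinger: "z \<in> snd ` S \<Longrightarrow> has_wirtinger Gc (wz Gc z) (wzb Gc z) z"
  by (metis Gc_has_derivative differentiable_def differentiable_has_wirtinger)

lemma wz_G_differentiable:
  assumes z: "z \<in> snd ` S"
  shows "wz Gc differentiable (at z)"
proof -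
  have wz_eq: "wz Gc w = (of_real (dd G 1 w) - \<i> * of_real (dd G \<i> w)) / 2" if w: "w \<in> snd ` S" for w
  proof -
    obtain G' where "(G has_derivative G') (at w)" "(Gc has_derivative (\<lambda>h. of_real (G' h))) (at w)"
      by (rule Gc_has_derivative[OF w])
    then have "dd Gc v w = of_real (dd G v w)" for v
      using dd_has_derivative by metis
    then show ?thesis unfolding wz_def by simp
  qed
  obtain D1 D2 where D1: "((dd G 1) has_derivative D1) (at z)" and D2: "((dd G \<i>) has_derivative D2) (at z)"
    using G_diff2 z by (meson differentiable_def)
  have "((\<lambda>w. (of_real (dd G 1 w) - \<i> * of_real (dd G \<i> w)) / 2) has_derivative
         (\<lambda>h. (of_real (D1 h) - \<i> * of_real (D2 h)) / 2)) (at z)"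
    by (intro bounded_linear.has_derivative[OF bounded_linear_divide] has_derivative_diff
        has_derivative_mult_right bounded_linear.has_derivative[OF bounded_linear_of_real] D1 D2)
  then have "(wz Gc has_derivative (\<lambda>h. (of_real (D1 h) - \<i> * of_real (D2 h)) / 2)) (at z)"
    by (rule has_derivative_transform_within_open[OF _ open_snd z]) (simp add: wz_eq)
  then show ?thesis by (auto simp: differentiable_def)
qed

end

text \<open>The algebraic identity behind the theorem: with \<open>u = q + b\<close>, \<open>s = z + z\<^sup>-\<close>,
  \<open>\<psi>\<^sub>q\<^sub>q\<^sub>- = A\<close>, \<open>\<psi>\<^sub>q\<^sub>q = 1/u - A\<close>, \<open>\<psi>\<^sub>z\<^sub>z\<^sub>- = (u + u\<^sup>-)/s\<^sup>2\<close>, and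
  \<open>\<psi>\<^sub>q\<^sub>z\<^sub>- \<psi>\<^sub>q\<^sub>-\<^sub>z = 1/s\<^sup>2\<close>, \<open>e\<^bsup>\<psi>\<^sub>q+\<psi>\<^sub>q\<^sub>-\<^esup> = u u\<^sup>-/s\<^sup>2\<close>, both sides agree.\<close>
lemma solution_identity:
  fixes U V s A qq bb :: complex
  assumes "U \<noteq> 0" "V \<noteq> 0" "s \<noteq> 0" "qq + bb = U + V"
  shows "A * (qq * inverse s ^ 2 + bb / s ^ 2) - inverse s ^ 2
    = U * V / s ^ 2 * (A ^ 2 - (1 / U - A) * (1 / V - A))"
proof -
  have "A * (qq * inverse s ^ 2 + bb / s ^ 2) - inverse s ^ 2 = (A * (U + V) - 1) / s^2"
    using assms by (simp add: field_simps power2_eq_square)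
  also have "\<dots> = U * V / s ^ 2 * (A ^ 2 - (1 / U - A) * (1 / V - A))"
    using assms by (simp add: field_simps power2_eq_square)
  finally show ?thesis .
qed

locale perturbed_setting = psi_setting +
  fixes \<Phi> g C :: "real \<Rightarrow> complex \<Rightarrow> complex"
  assumes admissible: "admissible_perturbation \<Phi> g C"
begin

definition psi :: "complex \<times> complex \<Rightarrow> complex" where
  "psi p = psi0 b L G p + \<Phi> (Im (fst p)) (snd p)"

definition g_yy :: "real \<Rightarrow> complex \<Rightarrow> complex" where
  "g_yy y z = vector_derivative (\<lambda>t. g t z) (at y)"

lemma Phi_y_deriv: "(q, z) \<in> S \<Longrightarrow> ((\<lambda>t. \<Phi> t z) has_vector_derivative g (Im q) z) (at (Im q))"
  using admissible_perturbationD(1)[OF admissible Re_pos] .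

lemma g_y_deriv: "(q, z) \<in> S \<Longrightarrow> ((\<lambda>t. g t z) has_vector_derivative g_yy (Im q) z) (at (Im q))"
  unfolding g_yy_def using admissible_perturbationD(2)[OF admissible Re_pos] .

lemma Phi_z_wirtinger:
  "(q, z) \<in> S \<Longrightarrow> has_wirtinger (\<Phi> (Im q)) (C (Im q) z) (wzb (\<Phi> (Im q)) z) z"
  using admissible_perturbationD(3)[OF admissible Re_pos] .

lemma C_deriv: "(q, z) \<in> S \<Longrightarrow> (C (Im q) has_field_derivative deriv (C (Im q)) z) (at z)"
  using admissible_perturbationD(4)[OF admissible Re_pos] .

lemma g_z_wirtinger:
  "(q, z) \<in> S \<Longrightarrow> has_wirtinger (g (Im q)) (wz (g (Im q)) z) (wzb (g (Im q)) z) z"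
  using admissible_perturbationD(5)[OF admissible Re_pos] .

lemma mixed_product:
  "(q, z) \<in> S \<Longrightarrow> (- inverse (z + cnj z) - \<i>/2 * wzb (g (Im q)) z) * (- inverse (z + cnj z) + \<i>/2 * wz (g (Im q)) z)
     = inverse (z + cnj z) ^ 2"
  using admissible_perturbationD(6)[OF admissible Re_pos] .

lemma psi_wirtinger_q:
  assumes qz: "(q, z) \<in> S"
  shows "has_wirtinger (\<lambda>w. psi (w, z)) (L (q, z) - Ln (z + cnj z) - \<i>/2 * g (Im q) z)
           (cnj (L (q, z)) - Ln (z + cnj z) + \<i>/2 * g (Im q) z) q"
proof -
  note Lq = has_wirtinger_holomorphic[OF L_deriv_q[OF qz]]
  note uL = has_wirtinger_mult[OF has_wirtinger_add[OF has_wirtinger_id has_wirtinger_const[of "b z"]] Lq]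
  note uL_cnj = has_wirtinger_mult[OF has_wirtinger_add[OF has_wirtinger_cnj_id
      has_wirtinger_const[of "cnj (b z)"]] has_wirtinger_cnj[OF Lq]]
  note linear = has_wirtinger_mult[OF has_wirtinger_add[OF has_wirtinger_id has_wirtinger_cnj_id]
      has_wirtinger_const[of "Ln (z + cnj z) + 1"]]
  note Phi = has_wirtinger_Im[OF Phi_y_deriv[OF qz]]
  have u: "q + b z \<noteq> 0" and u_cnj: "cnj q + cnj (b z) \<noteq> 0"
    using log_arg_nonzero[OF qz] by (metis complex_cnj_add complex_cnj_zero_iff)+
  show ?thesis
    by (rule has_wirtinger_cong[OF has_wirtinger_add[OF has_wirtinger_add[OF
          has_wirtinger_diff[OF has_wirtinger_add[OF uL uL_cnj] linear] has_wirtinger_const] Phi]])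
      (use u u_cnj in \<open>simp_all add: psi_def psi0_def\<close>)
qed

lemma Wq_psi: "(q, z) \<in> S \<Longrightarrow> Wq psi (q, z) = L (q, z) - Ln (z + cnj z) - \<i>/2 * g (Im q) z"
  using has_wirtinger_wz(1)[OF psi_wirtinger_q] by (simp add: Wq_slice)

lemma Wqb_psi: "(q, z) \<in> S \<Longrightarrow> Wqb psi (q, z) = cnj (L (q, z)) - Ln (z + cnj z) + \<i>/2 * g (Im q) z"
  using has_wirtinger_wz(2)[OF psi_wirtinger_q] by (simp add: Wqb_slice)

lemma Wz_psi:
  assumes qz: "(q, z) \<in> S"
  shows "Wz psi (q, z) = deriv b z * L (q, z) + deriv b z - (q + cnj q) * inverse (z + cnj z)
           + wz Gc z + C (Im q) z"
proof -
  note b' = has_wirtinger_holomorphic[OF b_deriv[OF snd_mem[OF qz]]]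
  note Lz = has_wirtinger_holomorphic[OF L_deriv_z[OF qz]]
  note uL = has_wirtinger_mult[OF has_wirtinger_add[OF has_wirtinger_const[of q] b'] Lz]
  note uL_cnj = has_wirtinger_mult[OF has_wirtinger_add[OF has_wirtinger_const[of "cnj q"]
      has_wirtinger_cnj[OF b']] has_wirtinger_cnj[OF Lz]]
  note linear = has_wirtinger_mult[OF has_wirtinger_const[of "q + cnj q"]
      has_wirtinger_add[OF has_wirtinger_Ln_re_part[OF Re_pos[OF qz]] has_wirtinger_const[of 1]]]
  note all = has_wirtinger_add[OF has_wirtinger_add[OF has_wirtinger_diff[OF
      has_wirtinger_add[OF uL uL_cnj] linear] G_wirtinger[OF snd_mem[OF qz]]] Phi_z_wirtinger[OF qz]]
  have "wz (\<lambda>w. psi (q, w)) z = deriv b z * L (q, z) + deriv b z - (q + cnj q) * inverse (z + cnj z)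
           + wz Gc z + C (Im q) z"
    by (rule has_wirtinger_wz(1)[OF has_wirtinger_cong[OF all _ _ refl]])
      (use log_arg_nonzero[OF qz] in \<open>simp_all add: psi_def psi0_def\<close>)
  then show ?thesis by (simp add: Wz_slice)
qed

text \<open>Second derivatives in \<open>q\<close>, where \<open>g\<^sub>y\<^sub>y\<close> enters through \<open>\<partial>\<^sub>q\<partial>\<^sub>q\<^sub>- = \<partial>\<^sub>y\<^sup>2/4\<close>.\<close>
lemma second_derivs_q:
  assumes qz: "(q, z) \<in> S"
  shows "Wq (Wq psi) (q, z) = 1 / (q + b z) - g_yy (Im q) z / 4"
    and "Wqb (Wq psi) (q, z) = g_yy (Im q) z / 4"
    and "Wqb (Wqb psi) (q, z) = cnj (1 / (q + b z)) - g_yy (Im q) z / 4"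
proof -
  define A where "A = g_yy (Im q) z / 4"
  have slice: "open {w. (w, z) \<in> S}" "q \<in> {w. (w, z) \<in> S}"
    using open_slice_fst[OF S_open] qz by auto
  note Lq = has_wirtinger_holomorphic[OF L_deriv_q[OF qz]]
  note gy = has_wirtinger_mult[OF has_wirtinger_const[of "\<i>/2"] has_wirtinger_Im[OF g_y_deriv[OF qz]]]
  have "has_wirtinger (\<lambda>w. Wq psi (w, z)) (1 / (q + b z) - A) A q"
    by (rule has_wirtinger_transform[OF has_wirtinger_diff[OF
          has_wirtinger_diff[OF Lq has_wirtinger_const] gy] slice])
      (simp_all add: Wq_psi A_def)
  then show "Wq (Wq psi) (q, z) = 1 / (q + b z) - g_yy (Im q) z / 4" "Wqb (Wq psi) (q, z) = g_yy (Im q) z / 4"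
    using has_wirtinger_wz by (simp_all add: Wq_slice Wqb_slice A_def)
  have "has_wirtinger (\<lambda>w. Wqb psi (w, z)) A (cnj (1 / (q + b z)) - A) q"
    by (rule has_wirtinger_transform[OF has_wirtinger_add[OF
          has_wirtinger_diff[OF has_wirtinger_cnj[OF Lq] has_wirtinger_const] gy] slice])
      (simp_all add: Wqb_psi A_def)
  then show "Wqb (Wqb psi) (q, z) = cnj (1 / (q + b z)) - g_yy (Im q) z / 4"
    using has_wirtinger_wz by (simp add: Wqb_slice A_def)
qed

lemma mixed_derivs:
  assumes qz: "(q, z) \<in> S"
  shows "Wzb (Wq psi) (q, z) = - inverse (z + cnj z) - \<i>/2 * wzb (g (Im q)) z"
    and "Wz (Wqb psi) (q, z) = - inverse (z + cnj z) + \<i>/2 * wz (g (Im q)) z"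
proof -
  have slice: "open {w. (q, w) \<in> S}" "z \<in> {w. (q, w) \<in> S}"
    using open_slice_snd[OF S_open] qz by auto
  note Lz = has_wirtinger_holomorphic[OF L_deriv_z[OF qz]]
  note Ln_s = has_wirtinger_Ln_re_part[OF Re_pos[OF qz]]
  note gz = has_wirtinger_mult[OF has_wirtinger_const[of "\<i>/2"] g_z_wirtinger[OF qz]]
  have "wzb (\<lambda>w. Wq psi (q, w)) z = - inverse (z + cnj z) - \<i>/2 * wzb (g (Im q)) z"
    by (rule has_wirtinger_wz(2)[OF has_wirtinger_transform[OF
          has_wirtinger_diff[OF has_wirtinger_diff[OF Lz Ln_s] gz] slice _ refl]])
      (simp_all add: Wq_psi)
  then show "Wzb (Wq psi) (q, z) = - inverse (z + cnj z) - \<i>/2 * wzb (g (Im q)) z"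
    by (simp add: Wzb_slice)
  have "wz (\<lambda>w. Wqb psi (q, w)) z = - inverse (z + cnj z) + \<i>/2 * wz (g (Im q)) z"
    by (rule has_wirtinger_wz(1)[OF has_wirtinger_transform[OF
          has_wirtinger_add[OF has_wirtinger_diff[OF has_wirtinger_cnj[OF Lz] Ln_s] gz] slice _ _ refl]])
      (simp_all add: Wqb_psi)
  then show "Wz (Wqb psi) (q, z) = - inverse (z + cnj z) + \<i>/2 * wz (g (Im q)) z"
    by (simp add: Wz_slice)
qed

text \<open>\<open>\<psi>\<^sub>z\<^sub>z\<^sub>- = (q + q\<^sup>-)/s\<^sup>2 + G\<^sub>z\<^sub>z\<^sub>-\<close>: the holomorphic terms \<open>b'\<close>, \<open>L\<close>, \<open>\<Phi>\<^sub>z\<close> drop out,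
  and the equation for \<open>G\<close> turns this into \<open>(u + u\<^sup>-)/s\<^sup>2\<close> with \<open>u = q + b(z)\<close>.\<close>
lemma Wzb_Wz_psi:
  assumes qz: "(q, z) \<in> S"
  shows "Wzb (Wz psi) (q, z) = (q + cnj q) * inverse (z + cnj z) ^ 2 + (b z + cnj (b z)) / (z + cnj z)\<^sup>2"
proof -
  have zS: "z \<in> snd ` S" using snd_mem[OF qz] .
  have slice: "open {w. (q, w) \<in> S}" "z \<in> {w. (q, w) \<in> S}"
    using open_slice_snd[OF S_open] qz by auto
  note b'' = has_wirtinger_holomorphic[OF deriv_b_deriv[OF zS]]
  note Lz = has_wirtinger_holomorphic[OF L_deriv_z[OF qz]]
  note inv_s = has_wirtinger_compose[OF DERIV_inverse[OF re_part_nonzero[OF qz]]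
      has_wirtinger_add[OF has_wirtinger_id has_wirtinger_cnj_id]]
  note Gz = differentiable_has_wirtinger[OF wz_G_differentiable[OF zS]]
  note Cz = has_wirtinger_holomorphic[OF C_deriv[OF qz]]
  note all = has_wirtinger_add[OF has_wirtinger_add[OF has_wirtinger_diff[OF
      has_wirtinger_add[OF has_wirtinger_mult[OF b'' Lz] b''] has_wirtinger_mult[OF has_wirtinger_const[of "q + cnj q"] inv_s]] Gz] Cz]
  have "wzb (\<lambda>w. Wz psi (q, w)) z = (q + cnj q) * inverse (z + cnj z) ^ 2 + (b z + cnj (b z)) / (z + cnj z)\<^sup>2"
    by (rule has_wirtinger_wz(2)[OF has_wirtinger_transform[OF all slice _ refl]])
      (use G_eq zS in \<open>simp_all add: Wz_psi power2_eq_square del: Set.ball_simps\<close>)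
  then show ?thesis by (simp add: Wzb_slice)
qed

lemma exp_first_derivs:
  assumes qz: "(q, z) \<in> S"
  shows "exp (Wq psi (q, z) + Wqb psi (q, z)) = (q + b z) * cnj (q + b z) / (z + cnj z)\<^sup>2"
proof -
  have "Wq psi (q, z) + Wqb psi (q, z) = L (q, z) + cnj (L (q, z)) - (Ln (z + cnj z) + Ln (z + cnj z))"
    using Wq_psi[OF qz] Wqb_psi[OF qz] by simp
  then have "exp (Wq psi (q, z) + Wqb psi (q, z))
      = exp (L (q, z)) * cnj (exp (L (q, z))) / (exp (Ln (z + cnj z)))\<^sup>2"
    by (simp add: exp_add exp_diff exp_cnj exp_double)
  also have "\<dots> = (q + b z) * cnj (q + b z) / (z + cnj z)\<^sup>2"
    using L_log qz re_part_nonzero[OF qz] by (simp add: power2_eq_square)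
  finally show ?thesis .
qed

theorem solves_psi: "solves S psi"
  unfolding solves_def
proof
  fix p assume "p \<in> S"
  then obtain q z where p: "p = (q, z)" and qz: "(q, z) \<in> S" by (cases p) auto
  have u: "q + b z \<noteq> 0" and u_cnj: "cnj (q + b z) \<noteq> 0"
    using log_arg_nonzero[OF qz] complex_cnj_zero_iff by blast+
  show "Wqb (Wq psi) p * Wzb (Wz psi) p - Wzb (Wq psi) p * Wz (Wqb psi) p =
        exp (Wq psi p + Wqb psi p) * ((Wqb (Wq psi) p)\<^sup>2 - Wq (Wq psi) p * Wqb (Wqb psi) p)"
    unfolding p second_derivs_q[OF qz] mixed_derivs[OF qz] mixed_product[OF qz] Wzb_Wz_psi[OF qz]
      exp_first_derivs[OF qz] complex_cnj_divide complex_cnj_one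
    by (rule solution_identity) (use u u_cnj re_part_nonzero[OF qz] in auto)
qed

end

lemma (in psi_setting) solves_perturbation:
  assumes "admissible_perturbation \<Phi> g C"
  shows "solves S (\<lambda>p. psi0 b L G p + \<Phi> (Im (fst p)) (snd p))"
proof -
  interpret perturbed_setting S b L G \<Phi> g C
    using assms by unfold_locales
  from solves_psi show ?thesis by (simp add: psi_def[abs_def])
qed

lemma smooth_real_deriv:
  assumes "smooth_real r"
  shows "(r has_real_derivative deriv r x) (at x)"
    and "(deriv r has_real_derivative deriv (deriv r) x) (at x)"
proof -
  have "((deriv ^^ 0) r) differentiable (at x)" "((deriv ^^ 1) r) differentiable (at x)"
    using assms unfolding smooth_real_def by blast+
  then show "(r has_real_derivative deriv r x) (at x)"
      "(deriv r has_real_derivative deriv (deriv r) x) (at x)"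
    by (simp_all add: DERIV_deriv_iff_real_differentiable)
qed

lemma admissible_zero: "admissible_perturbation (\<lambda>y z. 0) (\<lambda>y z. 0) (\<lambda>y z. 0)"
  by (rule admissible_perturbationI[where D="\<lambda>y z. 0" and gz="\<lambda>y z. 0" and gzb="\<lambda>y z. 0"])
    (auto intro: has_wirtinger_const simp: power2_eq_square)

text \<open>Adding a function \<open>r(y)\<close> of \<open>y\<close> alone preserves admissibility: it changes \<open>g\<close> by
  \<open>r'(y)\<close>, which does not affect the \<open>z\<close>-derivatives.\<close>
lemma admissible_add_y_term:
  assumes adm: "admissible_perturbation \<Phi> g C" and r: "smooth_real r"
  shows "admissible_perturbation (\<lambda>y z. of_real (r y) + \<Phi> y z) (\<lambda>y z. of_real (deriv r y) + g y z) C"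
proof (rule admissible_perturbationI[where D="\<lambda>y z. wzb (\<Phi> y) z"
      and gz="\<lambda>y z. wz (g y) z" and gzb="\<lambda>y z. wzb (g y) z"])
  fix y :: real and z :: complex
  assume z: "0 < Re z"
  note adm' = admissible_perturbationD[OF adm z, of y]
  show "((\<lambda>t. of_real (r t) + \<Phi> t z) has_vector_derivative of_real (deriv r y) + g y z) (at y)"
    by (intro has_vector_derivative_add has_vector_derivative_of_real smooth_real_deriv(1)[OF r] adm'(1))
  show "(\<lambda>t. of_real (deriv r t) + g t z) differentiable (at y)"
    using differentiableI_vector[OF adm'(2)]
      differentiableI_vector[OF has_vector_derivative_of_real[OF smooth_real_deriv(2)[OF r]]]
    by (rule differentiable_add[rotated])
  show "has_wirtinger (\<lambda>z. of_real (r y) + \<Phi> y z) (C y z) (wzb (\<Phi> y) z) z"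
    using has_wirtinger_add[OF has_wirtinger_const adm'(3)] by simp
  show "C y field_differentiable (at z)"
    using adm'(4) field_differentiable_def by blast
  show "has_wirtinger (\<lambda>z. of_real (deriv r y) + g y z) (wz (g y) z) (wzb (g y) z) z"
    using has_wirtinger_add[OF has_wirtinger_const adm'(5)] by simp
  show "(- inverse (z + cnj z) - \<i>/2 * wzb (g y) z) * (- inverse (z + cnj z) + \<i>/2 * wz (g y) z)
      = inverse (z + cnj z) ^ 2"
    using adm'(6) .
qed

lemma integrable_on_interval_UNIV:
  fixes F :: "real \<Rightarrow> 'a::banach"
  shows "continuous_on UNIV F \<Longrightarrow> F integrable_on {a..b}"
  by (rule integrable_continuous_interval) (rule continuous_on_subset, auto)

lemma oint_split:
  fixes F :: "real \<Rightarrow> complex"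
  assumes "continuous_on UNIV F" "m \<le> a" "m \<le> x"
  shows "oint F a x = integral {m..x} F - integral {m..a} F"
proof -
  note int = integrable_on_interval_UNIV[OF assms(1)]
  show ?thesis
  proof (cases "a \<le> x")
    case True
    have "integral {m..a} F + integral {a..x} F = integral {m..x} F"
      by (rule Henstock_Kurzweil_Integration.integral_combine) (use True assms int in auto)
    then show ?thesis using True by (simp add: oint_def algebra_simps)
  next
    case False
    have "integral {m..x} F + integral {x..a} F = integral {m..a} F"
      by (rule Henstock_Kurzweil_Integration.integral_combine) (use False assms int in auto)
    then show ?thesis using False by (simp add: oint_def algebra_simps)
  qed
qed

lemma oint_has_vector_derivative:
  fixes F :: "real \<Rightarrow> complex"
  assumes "continuous_on UNIV F"
  shows "((\<lambda>y. oint F a y) has_vector_derivative F x) (at x)"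
proof -
  define m where "m = min a x - 1"
  have "((\<lambda>u. integral {m..u} F) has_vector_derivative F x) (at x within {m..max a x + 1})"
    by (rule integral_has_vector_derivative) (use continuous_on_subset[OF assms] in \<open>auto simp: m_def\<close>)
  moreover have "at x within {m..max a x + 1} = at x"
    by (rule at_within_interior) (auto simp: m_def)
  ultimately have "((\<lambda>u. integral {m..u} F - integral {m..a} F) has_vector_derivative F x) (at x)"
    using has_vector_derivative_diff[OF _ has_vector_derivative_const] by fastforce
  then show ?thesis
  proof (rule has_vector_derivative_transform_within_open[where S="{m<..}"])
    show "integral {m..y} F - integral {m..a} F = oint F a y" if "y \<in> {m<..}" for y
      using oint_split[OF assms, of m a y] that by (simp add: m_def)
  qed (auto simp: m_def)
qed

lemma oint_cnj_diff:
  fixes F :: "real \<Rightarrow> complex"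
  assumes "continuous_on UNIV F"
  shows "oint (\<lambda>t. cnj (F t) - F t) a y = cnj (oint F a y) - oint F a y"
proof -
  have "continuous_on UNIV (\<lambda>t. cnj (F t))" using assms by (intro continuous_intros)
  with assms have "integral {u..v} (\<lambda>t. cnj (F t) - F t) = cnj (integral {u..v} F) - integral {u..v} F" for u v
    by (simp add: integral_diff integral_cnj integrable_on_interval_UNIV)
  then show ?thesis unfolding oint_def by simp
qed

lemma oint_const: "oint (\<lambda>t. c) a y = of_real (y - a) * c"
  by (simp add: oint_def scaleR_conv_of_real algebra_simps)

lemma oint_has_field_derivative:
  fixes f fx :: "complex \<Rightarrow> real \<Rightarrow> complex"
  assumes U: "open U" "convex U" "w0 \<in> U"
    and d: "\<And>w t. w \<in> U \<Longrightarrow> ((\<lambda>w. f w t) has_field_derivative fx w t) (at w)"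
    and cf: "\<And>w. w \<in> U \<Longrightarrow> continuous_on UNIV (f w)"
    and cfx: "continuous_on (U \<times> UNIV) (\<lambda>(w, t). fx w t)"
  shows "((\<lambda>w. oint (f w) a c) has_field_derivative oint (fx w0) a c) (at w0)"
proof -
  have L: "((\<lambda>w. integral {x..y} (f w)) has_field_derivative integral {x..y} (fx w0)) (at w0)" for x y
  proof -
    have "((\<lambda>w. integral (cbox x y) (f w)) has_field_derivative integral (cbox x y) (fx w0)) (at w0 within U)"
    proof (rule leibniz_rule_field_derivative[OF _ _ _ U(3) U(2)])
      show "f w integrable_on cbox x y" if "w \<in> U" for w
        using integrable_on_interval_UNIV[OF cf[OF that]] by simp
      show "continuous_on (U \<times> cbox x y) (\<lambda>(w, t). fx w t)"
        by (rule continuous_on_subset[OF cfx]) auto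
    qed (use d has_field_derivative_at_within in blast)
    then show ?thesis using at_within_open[OF U(3) U(1)] by simp
  qed
  show ?thesis
    using L[of a c] DERIV_minus[OF L[of c a]] by (simp add: oint_def)
qed

lemma K_integrand:
  assumes "0 < Re z"
  shows "Ln ((cnj z + 2 * \<i> * of_real x) / (z - 2 * \<i> * of_real x))
    = cnj (Ln (z - 2 * \<i> * of_real x)) - Ln (z - 2 * \<i> * of_real x)"
  using Ln_cnj_div[of "z - 2 * \<i> * of_real x"] assms by simp

text \<open>The mixed-derivative condition for \<open>g = 2\<i> (Ln u\<^sup>- - Ln u)\<close>, \<open>Re u = Re z > 0\<close>.\<close>
lemma arg_mixed_identity:
  assumes "0 < Re u" "Re u = Re z"
  shows "(- inverse (z + cnj z) - \<i>/2 * (2 * \<i> * (1 / cnj u))) * (- inverse (z + cnj z) + \<i>/2 * (2 * \<i> * (- 1 / u)))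
    = inverse (z + cnj z) ^ 2"
proof -
  have s: "z + cnj z = u + cnj u" and u: "u \<noteq> 0" "cnj u \<noteq> 0" and s0: "u + cnj u \<noteq> 0"
    using assms by (auto simp: complex_eq_iff)
  have "- inverse (u + cnj u) - \<i>/2 * (2 * \<i> * (1 / cnj u)) = u / ((u + cnj u) * cnj u)"
    using u s0 by (simp add: field_simps)
  moreover have "- inverse (u + cnj u) + \<i>/2 * (2 * \<i> * (- 1 / u)) = cnj u / ((u + cnj u) * u)"
    using u s0 by (simp add: field_simps)
  moreover have "u / (s' * cnj u) * (cnj u / (s' * u)) = inverse s' ^ 2" if "s' \<noteq> 0" for s'
    using u that by (simp add: field_simps power2_eq_square)
  ultimately show ?thesis
    unfolding s using s0 by simp
qed

lemma Ln_shift_continuous: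
  assumes "continuous_on UNIV c" "\<And>t. Re (c t) = 0" "0 < Re w"
  shows "continuous_on UNIV (\<lambda>t. Ln (w - c t))"
proof -
  have "w - c t \<notin> \<real>\<^sub>\<le>\<^sub>0" for t
    using assms(2)[of t] assms(3) by (auto simp: complex_nonpos_Reals_iff)
  then show ?thesis by (intro continuous_intros assms(1)) auto
qed

lemma shift_integrals_holomorphic:
  assumes c: "continuous_on UNIV c" "\<And>t. Re (c t) = 0" and z: "0 < Re z"
  shows "((\<lambda>w. oint (\<lambda>t. Ln (w - c t)) a y) has_field_derivative oint (\<lambda>t. 1 / (z - c t)) a y) (at z)"
    and "((\<lambda>w. oint (\<lambda>t. 1 / (w - c t)) a y) has_field_derivative oint (\<lambda>t. - 1 / (z - c t)^2) a y) (at z)"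
proof -
  define H where "H = {w::complex. 0 < Re w}"
  have H: "open H" "convex H" "z \<in> H"
    using z by (simp_all add: H_def open_halfspace_Re_gt convex_halfspace_Re_gt)
  have shift_pos: "0 < Re (w - c t)" if "w \<in> H" for w t
    using that c(2)[of t] by (simp add: H_def)
  then have shift_nz: "w - c t \<noteq> 0" if "w \<in> H" for w t using that by force
  have joint_cont: "continuous_on (H \<times> UNIV) (\<lambda>x. c (snd x))"
    by (rule continuous_on_compose2[OF c(1)]) (auto intro: continuous_intros)
  show "((\<lambda>w. oint (\<lambda>t. Ln (w - c t)) a y) has_field_derivative oint (\<lambda>t. 1 / (z - c t)) a y) (at z)"
  proof (rule oint_has_field_derivative[OF H])
    show "((\<lambda>w. Ln (w - c t)) has_field_derivative 1 / (w - c t)) (at w)" if "w \<in> H" for w t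
      using shift_pos[OF that, of t]
      by (auto intro!: derivative_eq_intros simp: complex_nonpos_Reals_iff divide_inverse)
    show "continuous_on UNIV (\<lambda>t. Ln (w - c t))" if "w \<in> H" for w
      using Ln_shift_continuous[OF c] that by (simp add: H_def)
    show "continuous_on (H \<times> UNIV) (\<lambda>(w, t). 1 / (w - c t))"
      using joint_cont shift_nz by (auto simp: split_beta intro!: continuous_intros)
  qed
  show "((\<lambda>w. oint (\<lambda>t. 1 / (w - c t)) a y) has_field_derivative oint (\<lambda>t. - 1 / (z - c t)^2) a y) (at z)"
  proof (rule oint_has_field_derivative[OF H])
    show "((\<lambda>w. 1 / (w - c t)) has_field_derivative - 1 / (w - c t)^2) (at w)" if "w \<in> H" for w t
      using shift_nz[OF that] by (auto intro!: derivative_eq_intros simp: power2_eq_square)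
    show "continuous_on UNIV (\<lambda>t. 1 / (w - c t))" if "w \<in> H" for w
      using shift_nz[OF that] by (intro continuous_intros c(1)) auto
    show "continuous_on (H \<times> UNIV) (\<lambda>(w, t). - 1 / (w - c t)^2)"
      using joint_cont shift_nz by (auto simp: split_beta intro!: continuous_intros)
  qed
qed

lemma arg_shift_differentiable:
  assumes c: "\<And>t. c differentiable (at t)" "\<And>t. Re (c t) = 0" and z: "0 < Re z"
  shows "(\<lambda>t. cnj (Ln (z - c t)) - Ln (z - c t)) differentiable (at y)"
proof -
  have "Ln differentiable (at (z - c y))"
    using c(2)[of y] z
    by (intro field_differentiable_imp_differentiable field_differentiable_at_Ln)
      (simp add: complex_nonpos_Reals_iff)
  from differentiable_compose[OF this differentiable_diff[OF differentiable_const c(1)]]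
  have "(\<lambda>t. Ln (z - c t)) differentiable (at y)" .
  moreover from differentiable_compose[OF bounded_linear_imp_differentiable[OF bounded_linear_cnj] this]
  have "(\<lambda>t. cnj (Ln (z - c t))) differentiable (at y)" .
  ultimately show ?thesis by (rule differentiable_diff[rotated])
qed

text \<open>The term \<open>2\<i> K(y, z, z\<^sup>-)\<close> is an admissible perturbation for every differentiable \<open>k\<close>:
  \<open>K = A\<^sup>- - A\<close> with \<open>A = \<integral> Ln (z - 2\<i>k(t)) dt\<close> holomorphic in \<open>z\<close>, so \<open>K\<^sub>z\<close> is
  holomorphic, and \<open>K\<^sub>y = Ln u\<^sup>- - Ln u\<close> with \<open>u = z - 2\<i>k(y)\<close>.\<close>
lemma admissible_K:
  fixes k :: "real \<Rightarrow> real"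
  assumes k: "\<And>t. k differentiable (at t)"
  defines "c \<equiv> \<lambda>t. 2 * \<i> * complex_of_real (k t)"
  shows "admissible_perturbation (\<lambda>y z. 2 * \<i> * Kfun k y0 y z)
           (\<lambda>y z. 2 * \<i> * (cnj (Ln (z - c y)) - Ln (z - c y)))
           (\<lambda>y z. 2 * \<i> * - oint (\<lambda>t. 1 / (z - c t)) y0 y)"
proof -
  have c_diff: "c differentiable (at t)" for t
    unfolding c_def
    using differentiable_compose[OF bounded_linear_imp_differentiable[OF bounded_linear_of_real] k]
    by (intro differentiable_mult differentiable_const)
  have c: "continuous_on UNIV c" "\<And>t. Re (c t) = 0"
    using c_diff by (auto intro!: continuous_at_imp_continuous_on differentiable_imp_continuous_within
        simp: c_def)
  have K_eq: "Kfun k y0 y w = oint (\<lambda>t. cnj (Ln (w - c t)) - Ln (w - c t)) y0 y" if "0 < Re w" for y w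
    using K_integrand that unfolding Kfun_def c_def by simp
  show ?thesis
  proof (rule admissible_perturbationI[where D="\<lambda>y z. 2 * \<i> * cnj (oint (\<lambda>t. 1 / (z - c t)) y0 y)"
        and gz="\<lambda>y z. 2 * \<i> * (- 1 / (z - c y))" and gzb="\<lambda>y z. 2 * \<i> * (1 / cnj (z - c y))"])
    fix y :: real and z :: complex
    assume z: "0 < Re z"
    have shift_pos: "0 < Re (z - c t)" for t using c(2)[of t] z by simp
    note Ln_cont = Ln_shift_continuous[OF c z]
    have "((\<lambda>y. oint (\<lambda>t. cnj (Ln (z - c t)) - Ln (z - c t)) y0 y) has_vector_derivative
        cnj (Ln (z - c y)) - Ln (z - c y)) (at y)"
      by (intro oint_has_vector_derivative continuous_on_diff continuous_on_cnj Ln_cont)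
    then show "((\<lambda>t. 2 * \<i> * Kfun k y0 t z) has_vector_derivative
        2 * \<i> * (cnj (Ln (z - c y)) - Ln (z - c y))) (at y)"
      unfolding K_eq[OF z] by (rule has_vector_derivative_mult_right)
    show "(\<lambda>t. 2 * \<i> * (cnj (Ln (z - c t)) - Ln (z - c t))) differentiable (at y)"
      using arg_shift_differentiable[OF c_diff c(2) z] by (intro differentiable_mult differentiable_const)
    note A = has_wirtinger_holomorphic[OF shift_integrals_holomorphic(1)[OF c z, of y0 y]]
    show "has_wirtinger (\<lambda>w. 2 * \<i> * Kfun k y0 y w) (2 * \<i> * - oint (\<lambda>t. 1 / (z - c t)) y0 y)
        (2 * \<i> * cnj (oint (\<lambda>t. 1 / (z - c t)) y0 y)) z"
    proof (rule has_wirtinger_transform[OF has_wirtinger_mult[OF has_wirtinger_const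
          has_wirtinger_diff[OF has_wirtinger_cnj[OF A] A]] open_halfspace_Re_gt[of 0]])
      show "2 * \<i> * (cnj (oint (\<lambda>t. Ln (w - c t)) y0 y) - oint (\<lambda>t. Ln (w - c t)) y0 y)
          = 2 * \<i> * Kfun k y0 y w" if "w \<in> {w. 0 < Re w}" for w
        using that by (simp add: K_eq oint_cnj_diff[OF Ln_shift_continuous[OF c]])
    qed (use z in simp_all)
    show "(\<lambda>w. 2 * \<i> * - oint (\<lambda>t. 1 / (w - c t)) y0 y) field_differentiable (at z)"
      using shift_integrals_holomorphic(2)[OF c z, of y0 y]
      by (auto intro!: derivative_eq_intros simp: field_differentiable_def)
    show "has_wirtinger (\<lambda>w. 2 * \<i> * (cnj (Ln (w - c y)) - Ln (w - c y)))
        (2 * \<i> * (- 1 / (z - c y))) (2 * \<i> * (1 / cnj (z - c y))) z"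
      by (rule has_wirtinger_cong[OF has_wirtinger_mult[OF has_wirtinger_const
            has_wirtinger_cnj_Ln_diff[OF shift_pos]]]) simp_all
    show "(- inverse (z + cnj z) - \<i> / 2 * (2 * \<i> * (1 / cnj (z - c y)))) *
        (- inverse (z + cnj z) + \<i> / 2 * (2 * \<i> * (- 1 / (z - c y)))) = inverse (z + cnj z) ^ 2"
      by (rule arg_mixed_identity) (use shift_pos c(2) in auto)
  qed
qed

text \<open>\<open>\<psi>\<^sub>1\<close> and \<open>\<psi>\<^sub>3\<close> are \<open>psi0\<close> plus the perturbations above; \<open>\<psi>\<^sub>2\<close> is \<open>\<psi>\<^sub>3\<close> for
  \<open>k = 0\<close> and \<open>y\<^sub>0 = 0\<close>, since then \<open>K = y ln (z\<^sup>-/z)\<close>.\<close>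
lemma psi1_eq: "psi1 b L G r = (\<lambda>p. psi0 b L G p + (of_real (r (Im (fst p))) + 0))"
  by (simp add: fun_eq_iff psi1_def psi0_def Let_def)

lemma psi3_eq: "psi3 b L G r k y0 = (\<lambda>p. psi0 b L G p
    + (of_real (r (Im (fst p))) + 2 * \<i> * Kfun k y0 (Im (fst p)) (snd p)))"
  by (simp add: fun_eq_iff psi3_def psi1_def psi0_def Let_def algebra_simps)

lemma psi2_eq: "psi2 b L G r = psi3 b L G r (\<lambda>t. 0) 0"
  by (simp add: fun_eq_iff psi2_def psi3_def Kfun_def oint_const)

theorem mainTheorem2:
  fixes S :: "(complex \<times> complex) set"
    and b :: "complex \<Rightarrow> complex"
    and L :: "complex \<times> complex \<Rightarrow> complex"
    and G :: "complex \<Rightarrow> real"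
    and r k :: "real \<Rightarrow> real"
    and y0 :: real
  assumes S_open: "open S"
    and S_pos: "\<forall>p\<in>S. Re (snd p) > 0"
    and b_hol: "b holomorphic_on (snd ` S)"
    and L_cont: "continuous_on S L"
    and L_log: "\<forall>p\<in>S. exp (L p) = fst p + b (snd p)"
    and r_smooth: "smooth_real r"
    and k_smooth: "smooth_real k"
    and G_diff: "\<forall>z\<in>snd ` S. G differentiable (at z)"
    and G_diff2: "\<forall>v. \<forall>z\<in>snd ` S. (dd G v) differentiable (at z)"
    and G_eq: "\<forall>z\<in>snd ` S. wzb (wz (\<lambda>w. complex_of_real (G w))) z
                 = (b z + cnj (b z)) / (z + cnj z)\<^sup>2"
  shows "solves S (psi1 b L G r) \<and> solves S (psi2 b L G r) \<and> solves S (psi3 b L G r k y0)"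
proof -
  interpret psi_setting S b L G
    by unfold_locales (fact S_open S_pos b_hol L_cont L_log G_diff G_diff2 G_eq)+
  have psi3: "solves S (psi3 b L G r \<kappa> y\<^sub>0)" if "\<And>t. \<kappa> differentiable (at t)" for \<kappa> y\<^sub>0
    unfolding psi3_eq
    by (rule solves_perturbation[OF admissible_add_y_term[OF admissible_K[OF that] r_smooth]])
  have "solves S (psi1 b L G r)"
    unfolding psi1_eq by (rule solves_perturbation[OF admissible_add_y_term[OF admissible_zero r_smooth]])
  moreover have "solves S (psi2 b L G r)"
    unfolding psi2_eq by (rule psi3) simp
  moreover have "k differentiable (at t)" for t
    using k_smooth unfolding smooth_real_def by (metis funpow_0)
  ultimately show ?thesis using psi3 by blast
qed

end
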